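(* Let $k\ge1$, $D_k=3k^2+3k+1$, and let $c\in P_k$. Let $\Delta=c+V(T_{D_k})=\{c+a\alpha_1+b\alpha_2 : 0\le b\le a\le D_k\}$. Then exactly $3k$ points of $P_k$ lie outside $\Delta$ and are at distance at most $k$ in $T_\infty$ from some vertex of $\Delta$.
   Context: Let $\alpha_1=(1,0)$ and $\alpha_2=(-\tfrac12,\tfrac{\sqrt3}{2})$. The triangular lattice $T_\infty$ is the infinite graph with vertex set $\{a\alpha_1+b\alpha_2 : a,b\in\mathbb Z\}$, two vertices being adjacent iff their Euclidean distance is $1$; distances are graph distances. For $d\ge0$, $T_d$ is the subgraph of $T_\infty$ induced by the vertices $a\alpha_1+b\alpha_2$ with $0\le b\le a\le d$. For $k\ge 1$, let $D_k=3k^2+3k+1$ and let $P_k$ (the pattern $P_{k+1,1}$) be the sublattice $\{x\,u+y\,v : x,y\in\mathbb Z\}$, where $u=(2k+1)\alpha_1+k\alpha_2$ and $v=(k+1)\alpha_1+(2k+1)\alpha_2$. *)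

theory Defs
  imports Complex_Main
begin

text \<open>Vertices of the triangular lattice are encoded by integer coordinates (a,b),
  standing for the point a*alpha1 + b*alpha2 of the plane (identified with the
  complex numbers), where alpha1 = 1 and alpha2 = -1/2 + i*sqrt 3/2.\<close>

definition alpha1 :: complex where "alpha1 = Complex 1 0"
definition alpha2 :: complex where "alpha2 = Complex (-1/2) (sqrt 3 / 2)"

definition tri_pt :: "int \<times> int \<Rightarrow> complex" where
  "tri_pt p = of_int (fst p) * alpha1 + of_int (snd p) * alpha2"

definition tri_adj :: "(int \<times> int) rel" where
  "tri_adj = {(p, q). cmod (tri_pt p - tri_pt q) = 1}"

definition tri_dist_le :: "int \<times> int \<Rightarrow> int \<times> int \<Rightarrow> nat \<Rightarrow> bool" where
  "tri_dist_le p q n \<longleftrightarrow> (\<exists>m\<le>n. (p, q) \<in> tri_adj ^^ m)"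

definition Dk :: "nat \<Rightarrow> nat" where
  "Dk k = 3 * k^2 + 3 * k + 1"

text \<open>The pattern P_k = {x u + y v}, u = (2k+1)alpha1 + k alpha2, v = (k+1)alpha1 + (2k+1)alpha2.\<close>
definition Pk :: "nat \<Rightarrow> (int \<times> int) set" where
  "Pk k = {(x * (2 * int k + 1) + y * (int k + 1), x * int k + y * (2 * int k + 1)) | x y. True}"

definition tri_Delta :: "int \<times> int \<Rightarrow> nat \<Rightarrow> (int \<times> int) set" where
  "tri_Delta c d = {(fst c + a, snd c + b) | a b. 0 \<le> b \<and> b \<le> a \<and> a \<le> int d}"

end

theory Submission
  imports Defs
begin

text \<open>In the coordinates (a, b) of a alpha1 + b alpha2 the graph distance of T_infinity is
  the hexagonal norm max |a| |b| |a - b|, and P_k is the lattice of all (a, b) with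
  D_k dvd a + (3k + 1) b. Relative to c, a point is within distance k of the triangle iff
  -k \<le> b, a - b, a \<le> D_k + k. A lattice point outside the triangle but this close to it lies
  beyond one of the three sides at some depth j \<in> {1..k}; the depth fixes one coordinate,
  and the congruence modulo D_k fixes the other because the range left for it is shorter
  than D_k. So each side contributes exactly one point per depth, 3k in all.\<close>

definition hex_norm :: "int \<Rightarrow> int \<Rightarrow> int" where
  "hex_norm x y = max \<bar>x\<bar> (max \<bar>y\<bar> \<bar>x - y\<bar>)"

definition hex_dist :: "int \<times> int \<Rightarrow> int \<times> int \<Rightarrow> int" where
  "hex_dist p q = hex_norm (fst p - fst q) (snd p - snd q)"

lemma tri_adj_iff_norm_form:
  "((a, b), (c, d)) \<in> tri_adj \<longleftrightarrow> (a - c)^2 - (a - c) * (b - d) + (b - d)^2 = (1::int)"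
proof -
  define x where "x = real_of_int (a - c)"
  define y where "y = real_of_int (b - d)"
  have diff: "tri_pt (a, b) - tri_pt (c, d) = Complex (x - y / 2) (y * sqrt 3 / 2)"
    by (simp add: tri_pt_def alpha1_def alpha2_def x_def y_def complex_eq_iff field_simps)
  have "(x - y / 2)^2 + (y * sqrt 3 / 2)^2 = x^2 - x * y + y^2"
    by (simp add: power2_eq_square field_simps)
  then have "((a, b), (c, d)) \<in> tri_adj \<longleftrightarrow> sqrt (x^2 - x * y + y^2) = 1"
    unfolding tri_adj_def mem_Collect_eq case_prod_conv diff by (simp add: cmod_def)
  also have "\<dots> \<longleftrightarrow> x^2 - x * y + y^2 = 1"
    by simp
  also have "\<dots> \<longleftrightarrow> real_of_int ((a - c)^2 - (a - c) * (b - d) + (b - d)^2) = 1"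
    by (simp add: x_def y_def)
  also have "\<dots> \<longleftrightarrow> (a - c)^2 - (a - c) * (b - d) + (b - d)^2 = 1"
    by (rule of_int_eq_1_iff)
  finally show ?thesis .
qed

lemma norm_form_eq_1_iff:
  fixes x y :: int
  shows "x^2 - x * y + y^2 = 1 \<longleftrightarrow> hex_norm x y = 1"
proof
  assume h: "x^2 - x * y + y^2 = 1"
  have "(2 * x - y)^2 + 3 * y^2 = 4" "(2 * y - x)^2 + 3 * x^2 = 4" "(x + y)^2 + 3 * (x - y)^2 = 4"
    using h by (simp_all add: power2_eq_square algebra_simps)
  then have "y^2 \<le> 1" "x^2 \<le> 1" "(x - y)^2 \<le> 1"
    using zero_le_power2[of "2 * x - y"] zero_le_power2[of "2 * y - x"] zero_le_power2[of "x + y"]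
    by linarith+
  then have "\<bar>x\<bar> \<le> 1" "\<bar>y\<bar> \<le> 1" "\<bar>x - y\<bar> \<le> 1"
    by (simp_all add: abs_square_le_1)
  moreover have "x \<noteq> 0 \<or> y \<noteq> 0" using h by auto
  ultimately show "hex_norm x y = 1"
    unfolding hex_norm_def by (auto simp: max_def)
next
  assume "hex_norm x y = 1"
  then have "\<bar>x\<bar> \<le> 1" "\<bar>y\<bar> \<le> 1" "\<bar>x - y\<bar> \<le> 1" "x \<noteq> 0 \<or> y \<noteq> 0"
    unfolding hex_norm_def by (auto simp: max_def split: if_splits)
  then have "x \<in> {-1, 0, 1}" "y \<in> {-1, 0, 1}" "\<bar>x - y\<bar> \<le> 1" "x \<noteq> 0 \<or> y \<noteq> 0"
    by auto
  then show "x^2 - x * y + y^2 = 1" by auto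
qed

lemma tri_adj_iff_hex_dist: "(p, q) \<in> tri_adj \<longleftrightarrow> hex_dist p q = 1"
  by (cases p, cases q) (simp add: tri_adj_iff_norm_form norm_form_eq_1_iff hex_dist_def)

lemma abs_le_hex_norm: "\<bar>x\<bar> \<le> hex_norm x y \<and> \<bar>y\<bar> \<le> hex_norm x y \<and> \<bar>x - y\<bar> \<le> hex_norm x y"
  by (simp add: hex_norm_def le_max_iff_disj)

lemma hex_norm_add_le: "hex_norm (x + x') (y + y') \<le> hex_norm x y + hex_norm x' y'"
proof -
  have "\<bar>x + x'\<bar> \<le> hex_norm x y + hex_norm x' y'"
    using abs_triangle_ineq[of x x'] abs_le_hex_norm[of x y] abs_le_hex_norm[of x' y'] by linarith
  moreover have "\<bar>y + y'\<bar> \<le> hex_norm x y + hex_norm x' y'"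
    using abs_triangle_ineq[of y y'] abs_le_hex_norm[of x y] abs_le_hex_norm[of x' y'] by linarith
  moreover have "\<bar>(x + x') - (y + y')\<bar> \<le> hex_norm x y + hex_norm x' y'"
    using abs_triangle_ineq[of "x - y" "x' - y'"] abs_le_hex_norm[of x y] abs_le_hex_norm[of x' y']
    by (simp add: algebra_simps)
  ultimately show ?thesis by (simp add: hex_norm_def[of "x + x'"])
qed

lemma hex_dist_triangle: "hex_dist p r \<le> hex_dist p q + hex_dist q r"
  using hex_norm_add_le[of "fst p - fst q" "fst q - fst r" "snd p - snd q" "snd q - snd r"]
  by (simp add: hex_dist_def)

lemma hex_norm_unit_step:
  assumes "hex_norm x y > 0"
  obtains u v where "hex_norm u v = 1" "hex_norm (x - u) (y - v) = hex_norm x y - 1"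
proof -
  consider "x > 0" "y > 0" | "x > 0" "y \<le> 0" | "x = 0" "y > 0" | "x = 0" "y < 0"
    | "x < 0" "y \<ge> 0" | "x < 0" "y < 0"
    using assms unfolding hex_norm_def by fastforce
  then show ?thesis
  proof cases
    case 1 then show ?thesis using that[of 1 1] by (smt (verit) hex_norm_def)
  next
    case 2 then show ?thesis using that[of 1 0] by (smt (verit) hex_norm_def)
  next
    case 3 then show ?thesis using that[of 0 1] by (smt (verit) hex_norm_def)
  next
    case 4 then show ?thesis using that[of 0 "-1"] by (smt (verit) hex_norm_def)
  next
    case 5 then show ?thesis using that[of "-1" 0] by (smt (verit) hex_norm_def)
  next
    case 6 then show ?thesis using that[of "-1" "-1"] by (smt (verit) hex_norm_def)
  qed
qed

lemma hex_norm_nonneg: "hex_norm x y \<ge> 0"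
  by (simp add: hex_norm_def)

lemma hex_dist_le_if_relpow_tri_adj: "(p, q) \<in> tri_adj ^^ n \<Longrightarrow> hex_dist p q \<le> int n"
proof (induction n arbitrary: q)
  case 0
  then show ?case by (simp add: hex_dist_def hex_norm_def)
next
  case (Suc n)
  then obtain r where "(p, r) \<in> tri_adj ^^ n" "(r, q) \<in> tri_adj" by auto
  then show ?case
    using Suc.IH hex_dist_triangle[of p q r] tri_adj_iff_hex_dist by fastforce
qed

lemma relpow_tri_adj_if_hex_dist: "hex_dist p q = int n \<Longrightarrow> (p, q) \<in> tri_adj ^^ n"
proof (induction n arbitrary: p)
  case 0
  then show ?case by (cases p, cases q) (auto simp: hex_dist_def hex_norm_def)
next
  case (Suc n)
  obtain a b where p: "p = (a, b)" by (cases p)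
  obtain u v where uv: "hex_norm u v = 1"
      "hex_norm (a - fst q - u) (b - snd q - v) = hex_norm (a - fst q) (b - snd q) - 1"
    using hex_norm_unit_step[of "a - fst q" "b - snd q"] Suc.prems by (auto simp: p hex_dist_def)
  have "(p, (a - u, b - v)) \<in> tri_adj"
    using uv(1) by (simp add: p tri_adj_iff_hex_dist hex_dist_def)
  moreover have "((a - u, b - v), q) \<in> tri_adj ^^ n"
    using uv(2) Suc.prems by (intro Suc.IH) (simp add: hex_dist_def p algebra_simps)
  ultimately show ?case by (rule relpow_Suc_I2)
qed

lemma tri_dist_le_iff_hex_dist: "tri_dist_le p q n \<longleftrightarrow> hex_dist p q \<le> int n"
proof
  assume "tri_dist_le p q n"
  then obtain m where "m \<le> n" "(p, q) \<in> tri_adj ^^ m"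
    unfolding tri_dist_le_def by blast
  then show "hex_dist p q \<le> int n"
    using hex_dist_le_if_relpow_tri_adj by fastforce
next
  assume "hex_dist p q \<le> int n"
  moreover have "(p, q) \<in> tri_adj ^^ nat (hex_dist p q)"
    using hex_norm_nonneg by (intro relpow_tri_adj_if_hex_dist) (simp add: hex_dist_def)
  ultimately show "tri_dist_le p q n"
    unfolding tri_dist_le_def by (metis nat_le_iff)
qed

lemma shifted_mem_tri_Delta_iff:
  "(fst c + A, snd c + B) \<in> tri_Delta c d \<longleftrightarrow> 0 \<le> B \<and> B \<le> A \<and> A \<le> int d"
  by (auto simp: tri_Delta_def)

lemma hex_dist_tri_Delta_le_iff:
  "(\<exists>q\<in>tri_Delta c d. hex_dist (fst c + A, snd c + B) q \<le> int n) \<longleftrightarrow>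
     - int n \<le> B \<and> B \<le> int d + int n \<and> - int n \<le> A - B \<and> A - B \<le> int d + int n \<and>
     - int n \<le> A \<and> A \<le> int d + int n"
proof
  assume "\<exists>q\<in>tri_Delta c d. hex_dist (fst c + A, snd c + B) q \<le> int n"
  then obtain a b where "0 \<le> b" "b \<le> a" "a \<le> int d" "hex_norm (A - a) (B - b) \<le> int n"
    by (auto simp: tri_Delta_def hex_dist_def)
  then show "- int n \<le> B \<and> B \<le> int d + int n \<and> - int n \<le> A - B \<and> A - B \<le> int d + int n \<and>
     - int n \<le> A \<and> A \<le> int d + int n"
    using abs_le_hex_norm[of "A - a" "B - b"] by (simp add: abs_le_iff)
next
  assume near: "- int n \<le> B \<and> B \<le> int d + int n \<and> - int n \<le> A - B \<and> A - B \<le> int d + int n \<and>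
     - int n \<le> A \<and> A \<le> int d + int n"
  define b where "b = max 0 (min B (int d))"
  define a where "a = max b (min A (int d))"
  have "(fst c + a, snd c + b) \<in> tri_Delta c d"
    by (auto simp: shifted_mem_tri_Delta_iff a_def b_def)
  moreover have "\<bar>A - a\<bar> \<le> int n \<and> \<bar>B - b\<bar> \<le> int n \<and> \<bar>(A - a) - (B - b)\<bar> \<le> int n"
    using near by (cases "B \<le> int d"; cases "0 \<le> B"; cases "A \<le> int d"; cases "b \<le> A")
      (simp_all add: abs_le_iff a_def b_def)
  then have "hex_dist (fst c + A, snd c + B) (fst c + a, snd c + b) \<le> int n"
    by (simp add: hex_dist_def hex_norm_def)
  ultimately show "\<exists>q\<in>tri_Delta c d. hex_dist (fst c + A, snd c + B) q \<le> int n" by blast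
qed

lemma Pk_iff_dvd: "p \<in> Pk k \<longleftrightarrow> int (Dk k) dvd fst p + (3 * int k + 1) * snd p"
proof
  assume "p \<in> Pk k"
  then obtain x y where "p = (x * (2 * int k + 1) + y * (int k + 1), x * int k + y * (2 * int k + 1))"
    unfolding Pk_def by blast
  then have "fst p + (3 * int k + 1) * snd p = int (Dk k) * (x + 2 * y)"
    by (simp add: Dk_def algebra_simps power2_eq_square)
  then show "int (Dk k) dvd fst p + (3 * int k + 1) * snd p" by simp
next
  assume "int (Dk k) dvd fst p + (3 * int k + 1) * snd p"
  then obtain t where t: "fst p + (3 * int k + 1) * snd p = int (Dk k) * t" ..
  \<comment> \<open>invert the basis matrix of P_k, whose determinant is D_k\<close>
  define x y where "x = (2 * int k + 1) * t - 2 * snd p" and "y = snd p - int k * t"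
  have "p = (x * (2 * int k + 1) + y * (int k + 1), x * int k + y * (2 * int k + 1))"
    using t by (simp add: x_def y_def Dk_def prod_eq_iff algebra_simps power2_eq_square)
  then show "p \<in> Pk k" unfolding Pk_def by blast
qed

lemma shifted_mem_Pk_iff:
  assumes "c \<in> Pk k"
  shows "(fst c + A, snd c + B) \<in> Pk k \<longleftrightarrow> int (Dk k) dvd A + (3 * int k + 1) * B"
proof -
  have "fst c + A + (3 * int k + 1) * (snd c + B)
      = (fst c + (3 * int k + 1) * snd c) + (A + (3 * int k + 1) * B)"
    by (simp add: algebra_simps)
  moreover have "int (Dk k) dvd fst c + (3 * int k + 1) * snd c"
    using assms by (simp add: Pk_iff_dvd)
  ultimately show ?thesis
    by (simp only: Pk_iff_dvd fst_conv snd_conv dvd_add_right_iff)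
qed

lemma eq_if_dvd_diff_abs_less:
  fixes x y D :: int
  assumes "D dvd x - y" "\<bar>x - y\<bar> < D"
  shows "x = y"
  using assms dvd_imp_le_int[of "x - y" D] by fastforce

lemma multiple_bounds:
  fixes j k :: int
  assumes "j \<in> {1..k}"
  shows "3 * k + 1 \<le> (3 * k + 1) * j" "(3 * k + 1) * j \<le> 3 * k^2 + k"
    "3 * k + 2 \<le> (3 * k + 2) * j" "(3 * k + 2) * j \<le> 3 * k^2 + 2 * k"
  using assms mult_left_mono[of 1 j "3 * k + 1"] mult_left_mono[of j k "3 * k + 1"]
    mult_left_mono[of 1 j "3 * k + 2"] mult_left_mono[of j k "3 * k + 2"]
  by (auto simp: power2_eq_square algebra_simps)

definition near_exterior_lattice :: "int \<Rightarrow> int \<Rightarrow> (int \<times> int) set" where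
  "near_exterior_lattice k D = {(A, B). D dvd A + (3 * k + 1) * B \<and> \<not> (0 \<le> B \<and> B \<le> A \<and> A \<le> D) \<and>
     - k \<le> B \<and> B \<le> D + k \<and> - k \<le> A - B \<and> A - B \<le> D + k \<and> - k \<le> A \<and> A \<le> D + k}"

definition side_points :: "int \<Rightarrow> int \<Rightarrow> (int \<times> int) set" where
  "side_points k D = (\<lambda>j. ((3 * k + 1) * j, - j)) ` {1..k} \<union> (\<lambda>j. (D + j, (3 * k + 2) * j)) ` {1..k}
     \<union> (\<lambda>j. (D - (3 * k + 2) * j, D - (3 * k + 1) * j)) ` {1..k}"

lemma near_exterior_lattice_subset_side_points:
  fixes k D :: int
  assumes k: "k \<ge> 1" and D: "D = 3 * k^2 + 3 * k + 1"
  shows "near_exterior_lattice k D \<subseteq> side_points k D"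
proof (clarify)
  fix A B
  assume "(A, B) \<in> near_exterior_lattice k D"
  then have dvd: "D dvd A + (3 * k + 1) * B" and out: "\<not> (0 \<le> B \<and> B \<le> A \<and> A \<le> D)"
    and near: "- k \<le> B" "B \<le> D + k" "- k \<le> A - B" "A - B \<le> D + k" "- k \<le> A" "A \<le> D + k"
    by (auto simp: near_exterior_lattice_def)
  consider "B < 0" | "0 \<le> B" "D < A" | "0 \<le> B" "A \<le> D" "A < B" using out by linarith
  then show "(A, B) \<in> side_points k D"
  proof cases
    case 1
    define j where "j = - B"
    have j: "j \<in> {1..k}" using 1 near by (simp add: j_def)
    have "D dvd A - (3 * k + 1) * j" using dvd by (simp add: j_def)
    moreover have "\<bar>A - (3 * k + 1) * j\<bar> < D"
      using multiple_bounds[OF j] near D k j_def unfolding abs_less_iff by linarith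
    ultimately have "A = (3 * k + 1) * j" by (rule eq_if_dvd_diff_abs_less)
    then have "(A, B) = ((3 * k + 1) * j, - j)" by (simp add: j_def)
    then show ?thesis using j unfolding side_points_def by blast
  next
    case 2
    define j where "j = A - D"
    have j: "j \<in> {1..k}" using 2 near by (simp add: j_def)
    have "B - (3 * k + 2) * j = D * (3 * B + 3 * k + 2) - (3 * k + 2) * (A + (3 * k + 1) * B)"
      by (simp add: j_def D algebra_simps power2_eq_square)
    then have "D dvd B - (3 * k + 2) * j" using dvd by simp
    moreover have "\<bar>B - (3 * k + 2) * j\<bar> < D"
      using multiple_bounds[OF j] near D k 2 unfolding abs_less_iff by linarith
    ultimately have "B = (3 * k + 2) * j" by (rule eq_if_dvd_diff_abs_less)
    then have "(A, B) = (D + j, (3 * k + 2) * j)" by (simp add: j_def)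
    then show ?thesis using j unfolding side_points_def by blast
  next
    case 3
    define j where "j = B - A"
    have j: "j \<in> {1..k}" using 3 near by (simp add: j_def)
    have "(D - (3 * k + 2) * j) - A = D * (1 - 3 * B) + (3 * k + 1) * (A + (3 * k + 1) * B)"
      by (simp add: j_def D algebra_simps power2_eq_square)
    then have "D dvd (D - (3 * k + 2) * j) - A" using dvd by simp
    moreover have "\<bar>(D - (3 * k + 2) * j) - A\<bar> < D"
      using multiple_bounds[OF j] near D k 3 unfolding abs_less_iff by linarith
    ultimately have "A = D - (3 * k + 2) * j" by (rule eq_if_dvd_diff_abs_less[symmetric])
    then have "(A, B) = (D - (3 * k + 2) * j, D - (3 * k + 1) * j)" by (simp add: j_def algebra_simps)
    then show ?thesis using j unfolding side_points_def by blast
  qed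
qed

lemma side_points_subset_near_exterior_lattice:
  fixes k D :: int
  assumes k: "k \<ge> 1" and D: "D = 3 * k^2 + 3 * k + 1"
  shows "side_points k D \<subseteq> near_exterior_lattice k D"
proof -
  have "((3 * k + 1) * j, - j) \<in> near_exterior_lattice k D"
    "(D + j, (3 * k + 2) * j) \<in> near_exterior_lattice k D"
    "(D - (3 * k + 2) * j, D - (3 * k + 1) * j) \<in> near_exterior_lattice k D"
    if j: "j \<in> {1..k}" for j
  proof -
    have "D + j + (3 * k + 1) * ((3 * k + 2) * j) = D * (1 + 3 * j)"
      "D - (3 * k + 2) * j + (3 * k + 1) * (D - (3 * k + 1) * j) = D * (3 * k + 2 - 3 * j)"
      by (simp_all add: D algebra_simps power2_eq_square)
    then have dvd: "D dvd D + j + (3 * k + 1) * ((3 * k + 2) * j)"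
      "D dvd D - (3 * k + 2) * j + (3 * k + 1) * (D - (3 * k + 1) * j)"
      "D dvd (3 * k + 1) * j + (3 * k + 1) * - j"
      by simp_all
    have "(3 * k + 2) * j = (3 * k + 1) * j + j" by (simp add: algebra_simps)
    note bounds = this multiple_bounds[OF j] j D k
    show "((3 * k + 1) * j, - j) \<in> near_exterior_lattice k D"
      "(D + j, (3 * k + 2) * j) \<in> near_exterior_lattice k D"
      "(D - (3 * k + 2) * j, D - (3 * k + 1) * j) \<in> near_exterior_lattice k D"
      unfolding near_exterior_lattice_def mem_Collect_eq case_prod_conv
      by (intro conjI; insert dvd bounds; (assumption | simp only: atLeastAtMost_iff; linarith))+
  qed
  then show ?thesis unfolding side_points_def by blast
qed

lemma card_side_points:
  fixes k D :: int
  assumes k: "k \<ge> 1" and D: "D = 3 * k^2 + 3 * k + 1"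
  shows "card (side_points k D) = 3 * nat k"
proof -
  let ?F1 = "(\<lambda>j. ((3 * k + 1) * j, - j)) ` {1..k}"
  let ?F2 = "(\<lambda>j. (D + j, (3 * k + 2) * j)) ` {1..k}"
  let ?F3 = "(\<lambda>j. (D - (3 * k + 2) * j, D - (3 * k + 1) * j)) ` {1..k}"
  have "inj_on (\<lambda>j. ((3 * k + 1) * j, - j)) {1..k}" "inj_on (\<lambda>j. (D + j, (3 * k + 2) * j)) {1..k}"
    "inj_on (\<lambda>j. (D - (3 * k + 2) * j, D - (3 * k + 1) * j)) {1..k}"
    by (auto simp: inj_on_def)
  then have card: "card ?F1 = nat k" "card ?F2 = nat k" "card ?F3 = nat k"
    by (simp_all add: card_image)
  have F1: "snd x < 0" if "x \<in> ?F1" for x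
    using that by auto
  have F2: "snd x > 0 \<and> fst x > D" if "x \<in> ?F2" for x
  proof -
    obtain j where j: "j \<in> {1..k}" "x = (D + j, (3 * k + 2) * j)" using \<open>x \<in> ?F2\<close> by blast
    then show ?thesis using multiple_bounds(3)[OF j(1)] k by simp
  qed
  have F3: "snd x > 0 \<and> fst x < D" if "x \<in> ?F3" for x
  proof -
    obtain j where j: "j \<in> {1..k}" "x = (D - (3 * k + 2) * j, D - (3 * k + 1) * j)"
      using \<open>x \<in> ?F3\<close> by blast
    have "D - (3 * k + 1) * j > 0" "D - (3 * k + 2) * j < D"
      using multiple_bounds[OF j(1)] k D by linarith+
    then show ?thesis by (simp add: j(2))
  qed
  have "?F1 \<inter> ?F2 = {}" "(?F1 \<union> ?F2) \<inter> ?F3 = {}"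
    using F1 F2 F3 by (meson disjoint_iff not_less_iff_gr_or_eq Un_iff)+
  then show ?thesis
    unfolding side_points_def by (simp add: card_Un_disjoint card)
qed

lemma bij_betw_translate:
  fixes c :: "'a::ab_group_add \<times> 'a"
  shows "bij_betw (\<lambda>(A, B). (fst c + A, snd c + B)) {(A, B). (fst c + A, snd c + B) \<in> S} S"
  by (rule bij_betw_byWitness[where f' = "\<lambda>(a, b). (a - fst c, b - snd c)"]) auto

theorem lemma2:
  fixes k :: nat and c :: "int \<times> int"
  assumes "k \<ge> 1" and "c \<in> Pk k"
  shows "finite {p \<in> Pk k. p \<notin> tri_Delta c (Dk k) \<and> (\<exists>q\<in>tri_Delta c (Dk k). tri_dist_le p q k)}
    \<and> card {p \<in> Pk k. p \<notin> tri_Delta c (Dk k) \<and> (\<exists>q\<in>tri_Delta c (Dk k). tri_dist_le p q k)} = 3 * k"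
proof -
  let ?S = "{p \<in> Pk k. p \<notin> tri_Delta c (Dk k) \<and> (\<exists>q\<in>tri_Delta c (Dk k). tri_dist_le p q k)}"
  define K D where "K = int k" and "D = 3 * K^2 + 3 * K + 1"
  have K: "K \<ge> 1" using assms(1) by (simp add: K_def)
  have "int (Dk k) = D" by (simp add: Dk_def D_def K_def)
  then have "{(A, B). (fst c + A, snd c + B) \<in> ?S} = near_exterior_lattice K D"
    using assms(2) unfolding near_exterior_lattice_def
    by (simp add: shifted_mem_Pk_iff shifted_mem_tri_Delta_iff tri_dist_le_iff_hex_dist
        hex_dist_tri_Delta_le_iff K_def)
  also have "\<dots> = side_points K D"
    using near_exterior_lattice_subset_side_points[OF K D_def]
      side_points_subset_near_exterior_lattice[OF K D_def] by (rule subset_antisym)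
  finally have "finite {(A, B). (fst c + A, snd c + B) \<in> ?S}"
    "card {(A, B). (fst c + A, snd c + B) \<in> ?S} = 3 * k"
    using card_side_points[OF K D_def] by (simp_all add: side_points_def K_def)
  then show ?thesis
    unfolding bij_betw_finite[OF bij_betw_translate] bij_betw_same_card[OF bij_betw_translate]
    by (rule conjI)
qed

end
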